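(* Let $\mathfrak{s}$ be a binary word over $\{\mathsf{A},\mathsf{B}\}$ that is either empty or ends with the letter $\mathsf{B}$, and let $n\ge 0$ be an integer. Then \[ \max_{|\mathfrak{t}|=n} \mathsf{P}(\mathfrak{s}\circ\mathfrak{t}) = \mathsf{P}(\mathfrak{s}\circ\mathfrak{z}_n), \] where the maximum is over all binary words $\mathfrak{t}$ of length $n$. Moreover, if $\mathfrak{s}$ is nonempty, then $\mathfrak{t}=\mathfrak{z}_n$ is the only word of length $n$ attaining this maximum.
   Context: $\circ$ denotes concatenation, $|\mathfrak{t}|$ the length of $\mathfrak{t}$. $\mathsf{P}(\mathfrak{w})$ is the number of distinct words that are subsequences (not necessarily contiguous) of $\mathfrak{w}$, the empty word included. $\mathfrak{z}_n$ denotes the alternating word $\mathsf{ABAB}\ldots$ of length $n$ starting with $\mathsf{A}$ (so $\mathfrak{z}_0$ is empty). *)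

theory Defs
  imports Main "HOL-Library.Sublist"
begin

datatype letter = A | B

definition P :: "letter list \<Rightarrow> nat" where
  "P w = card {u. subseq u w}"

definition z :: "nat \<Rightarrow> letter list" where
  "z n = map (\<lambda>i. if even i then A else B) [0..<n]"

end

theory Submission
  imports Defs
begin

(* Let e_c(w) be the number of distinct nonempty subsequences of w ending in c. Then
   P(w) = 1 + e_A(w) + e_B(w), and appending c replaces e_c by P(w) while keeping the
   other count. So only the sorted pair (m, M) of counts matters, and one letter turns it
   into either (M, 1 + m + M) (the letter with the smaller count) or the componentwise
   smaller (m, 1 + m + M). As the final value grows monotonically in the pair, always
   appending the letter with the smaller count is optimal, strictly so when m < M; for s
   ending in B this greedy continuation is ABAB... *)

lemma subseq_snoc_iff:
  "subseq (xs @ [x]) (ys @ [y]) \<longleftrightarrow> (if x = y then subseq xs ys else subseq (xs @ [x]) ys)"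
proof (cases "x = y")
  case False
  have "subseq (xs @ [x]) ys" if "subseq (xs @ [x]) (ys @ [y])"
  proof -
    from that obtain us vs where split: "xs @ [x] = us @ vs" "subseq us ys" "subseq vs [y]"
      by (auto elim: subseq_appendE)
    from \<open>subseq vs [y]\<close> have "vs = [] \<or> vs = [y]"
      by (cases vs) (auto split: if_splits)
    with split False show ?thesis by auto
  qed
  with False show ?thesis by (auto intro: subseq_rev_drop_many)
qed simp

lemma finite_subseqs: "finite {xs. subseq xs ys}"
  by (metis set_subseqs_eq List.finite_set)

definition count_ending :: "'a \<Rightarrow> 'a list \<Rightarrow> nat" where
  "count_ending x ys = card {xs. subseq xs ys \<and> xs \<noteq> [] \<and> last xs = x}"

lemma count_ending_Nil [simp]: "count_ending x [] = 0"
  unfolding count_ending_def by (metis (mono_tags, lifting) card.empty empty_Collect_eq list_emb_Nil2)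

lemma count_ending_snoc:
  "count_ending x (ys @ [y]) = (if y = x then card {xs. subseq xs ys} else count_ending x ys)"
proof (cases "y = x")
  case True
  have "{xs. subseq xs (ys @ [x]) \<and> xs \<noteq> [] \<and> last xs = x} = (\<lambda>xs. xs @ [x]) ` {xs. subseq xs ys}"
  proof (intro set_eqI)
    show "xs \<in> {xs. subseq xs (ys @ [x]) \<and> xs \<noteq> [] \<and> last xs = x} \<longleftrightarrow>
          xs \<in> (\<lambda>xs. xs @ [x]) ` {xs. subseq xs ys}" for xs
      by (cases xs rule: rev_cases) auto
  qed
  moreover have "inj (\<lambda>xs. xs @ [x])"
    by (rule injI) simp
  ultimately show ?thesis
    using True by (simp add: count_ending_def card_image inj_on_subset)
next
  case False
  have "subseq xs (ys @ [y]) \<longleftrightarrow> subseq xs ys" if "xs \<noteq> []" "last xs = x" for xs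
    using that False by (cases xs rule: rev_cases) (auto simp: subseq_snoc_iff)
  then have "{xs. subseq xs (ys @ [y]) \<and> xs \<noteq> [] \<and> last xs = x} =
             {xs. subseq xs ys \<and> xs \<noteq> [] \<and> last xs = x}"
    by blast
  with False show ?thesis
    unfolding count_ending_def by simp
qed

lemma count_ending_less_card_subseqs: "count_ending x ys < card {xs. subseq xs ys}"
  unfolding count_ending_def by (rule psubset_card_mono) (auto intro: finite_subseqs)

lemma count_ending_less_snoc: "y \<noteq> x \<Longrightarrow> count_ending y (ys @ [x]) < count_ending x (ys @ [x])"
  by (simp add: count_ending_snoc count_ending_less_card_subseqs)

fun flip :: "letter \<Rightarrow> letter" where
  "flip A = B"
| "flip B = A"

lemma flip_neq [simp]: "flip x \<noteq> x" "x \<noteq> flip x"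
  by (cases x; simp)+

lemma flip_flip [simp]: "flip (flip x) = x"
  by (cases x) simp_all

fun alt :: "letter \<Rightarrow> nat \<Rightarrow> letter list" where
  "alt x 0 = []"
| "alt x (Suc n) = x # alt (flip x) n"

lemma alt_conv_upt: "alt (if even k then A else B) n = map (\<lambda>i. if even i then A else B) [k..<k + n]"
proof (induction n arbitrary: k)
  case (Suc n)
  have "[k..<k + Suc n] = k # [Suc k..<Suc k + n]"
    by (simp del: upt_Suc add: upt_conv_Cons)
  moreover have "flip (if even k then A else B) = (if even (Suc k) then A else B)"
    by simp
  ultimately show ?case
    using Suc.IH[of "Suc k"] by (simp del: upt_Suc)
qed simp

lemma z_eq_alt: "z n = alt A n"
  using alt_conv_upt[of 0 n] by (simp add: z_def)

lemma P_eq_count_ending: "P w = 1 + count_ending A w + count_ending B w"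
proof -
  let ?S = "\<lambda>x. {xs. subseq xs w \<and> xs \<noteq> [] \<and> last xs = x}"
  have "{xs. subseq xs w} = insert [] (?S A \<union> ?S B)"
  proof (intro set_eqI iffI)
    show "xs \<in> insert [] (?S A \<union> ?S B)" if "xs \<in> {xs. subseq xs w}" for xs
      using that by (cases "last xs") auto
  qed auto
  then have "P w = card (insert [] (?S A \<union> ?S B))"
    by (simp only: P_def)
  also have "\<dots> = 1 + card (?S A \<union> ?S B)"
    using finite_subseqs[of w] by (simp add: rev_finite_subset[of "{xs. subseq xs w}"])
  also have "card (?S A \<union> ?S B) = card (?S A) + card (?S B)"
    using finite_subseqs[of w] by (intro card_Un_disjoint) (auto intro: rev_finite_subset)
  finally show ?thesis
    by (simp add: count_ending_def)
qed

lemma P_eq_count_ending_flip: "P w = 1 + count_ending x w + count_ending (flip x) w"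
  by (cases x) (simp_all add: P_eq_count_ending)

lemma count_ending_snoc_letter:
  "count_ending x (w @ [y]) = (if y = x then P w else count_ending x w)"
  by (simp add: count_ending_snoc P_def)

(* The value P(s @ t) when the sorted counts of s are (m, M) and t, of length n, always
   appends the letter with the smaller count. *)
fun greedy_P :: "nat \<Rightarrow> nat \<Rightarrow> nat \<Rightarrow> nat" where
  "greedy_P m M 0 = 1 + m + M"
| "greedy_P m M (Suc n) = greedy_P M (1 + m + M) n"

lemma greedy_P_mono: "m \<le> m' \<Longrightarrow> M \<le> M' \<Longrightarrow> greedy_P m M n \<le> greedy_P m' M' n"
  by (induction n arbitrary: m M m' M') simp_all

lemma greedy_P_strict_mono:
  "m \<le> m' \<Longrightarrow> M \<le> M' \<Longrightarrow> m + M < m' + M' \<Longrightarrow> greedy_P m M n < greedy_P m' M' n"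
  by (induction n arbitrary: m M m' M') simp_all

lemma P_append_alt:
  assumes "count_ending x s \<le> count_ending (flip x) s"
  shows "P (s @ alt x n) = greedy_P (count_ending x s) (count_ending (flip x) s) n"
  using assms
proof (induction n arbitrary: s x)
  case 0
  then show ?case using P_eq_count_ending_flip[of s x] by simp
next
  case (Suc n)
  have "count_ending (flip x) (s @ [x]) = count_ending (flip x) s"
    and "count_ending x (s @ [x]) = P s"
    by (simp_all add: count_ending_snoc_letter)
  moreover have "count_ending (flip x) s \<le> P s"
    by (simp add: P_eq_count_ending_flip[of s x])
  ultimately have "P ((s @ [x]) @ alt (flip x) n) = greedy_P (count_ending (flip x) s) (P s) n"
    using Suc.IH[where s = "s @ [x]" and x = "flip x"] by simp
  then show ?case
    by (simp add: P_eq_count_ending_flip[of s x])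
qed

lemma P_append_le_greedy_P:
  "P (s @ t) \<le> greedy_P (min (count_ending A s) (count_ending B s))
                         (max (count_ending A s) (count_ending B s)) (length t)"
proof (induction t arbitrary: s)
  case Nil
  then show ?case by (simp add: P_eq_count_ending)
next
  case (Cons y t)
  let ?m = "min (count_ending A s) (count_ending B s)"
  let ?M = "max (count_ending A s) (count_ending B s)"
  have "P (s @ y # t) \<le> greedy_P (count_ending (flip y) s) (P s) (length t)"
    using Cons.IH[of "s @ [y]"]
    by (cases y) (simp_all add: count_ending_snoc_letter P_eq_count_ending min_def max_def)
  also have "\<dots> \<le> greedy_P ?M (1 + ?m + ?M) (length t)"
    by (intro greedy_P_mono) (cases y; simp add: P_eq_count_ending)+
  finally show ?case
    by simp
qed

lemma P_append_less_alt:
  assumes "count_ending x s < count_ending (flip x) s" "length t = n" "t \<noteq> alt x n"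
  shows "P (s @ t) < P (s @ alt x n)"
  using assms
proof (induction n arbitrary: s x t)
  case 0
  then show ?case by simp
next
  case (Suc n)
  then obtain y t' where t: "t = y # t'" "length t' = n"
    by (cases t) auto
  show ?case
  proof (cases "y = x")
    case True
    have "count_ending (flip x) (s @ [x]) < count_ending x (s @ [x])"
      by (rule count_ending_less_snoc) simp
    with Suc.IH[where s = "s @ [x]" and x = "flip x" and t = t'] Suc.prems t True show ?thesis
      by simp
  next
    case False
    then have "y = flip x"
      by (cases x; cases y) simp_all
    have "P (s @ t) \<le> greedy_P (count_ending x s) (P s) n"
      using P_append_le_greedy_P[of "s @ [y]" t'] t \<open>y = flip x\<close>
      by (cases x) (simp_all add: count_ending_snoc_letter P_eq_count_ending)
    also have "\<dots> < greedy_P (count_ending (flip x) s) (P s) n"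
      using Suc.prems(1) by (intro greedy_P_strict_mono) (simp_all add: P_eq_count_ending_flip[of s x])
    also have "\<dots> = P (s @ alt x (Suc n))"
      using P_append_alt[of x s "Suc n"] Suc.prems(1) by (simp add: P_eq_count_ending_flip[of s x])
    finally show ?thesis .
  qed
qed

lemma count_ending_A_le_B:
  assumes "s = [] \<or> last s = B"
  shows "count_ending A s \<le> count_ending B s" and "s \<noteq> [] \<Longrightarrow> count_ending A s < count_ending B s"
proof -
  show "count_ending A s < count_ending B s" if "s \<noteq> []"
  proof -
    from that assms have "s = butlast s @ [B]"
      by (metis append_butlast_last_id)
    then show ?thesis
      by (metis count_ending_less_snoc letter.distinct(1))
  qed
  then show "count_ending A s \<le> count_ending B s"
    by (cases "s = []") simp_all
qed

lemma finite_lists_length_eq_letter: "finite {t :: letter list. length t = n}"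
proof -
  have "finite (UNIV :: letter set)"
    by (rule finite_subset[of _ "{A, B}"]) (use letter.exhaust in auto)
  then show ?thesis
    using finite_lists_length_eq[of "UNIV :: letter set" n] by simp
qed

theorem theorem3:
  fixes s :: "letter list" and n :: nat
  assumes "s = [] \<or> last s = B"
  shows "Max ((\<lambda>t. P (s @ t)) ` {t. length t = n}) = P (s @ z n) \<and>
         (s \<noteq> [] \<longrightarrow> (\<forall>t. length t = n \<and> P (s @ t) = P (s @ z n) \<longrightarrow> t = z n))"
proof
  have "P (s @ t) \<le> P (s @ z n)" if "length t = n" for t
    using P_append_le_greedy_P[of s t] P_append_alt[of A s n] count_ending_A_le_B[OF assms] that
    by (simp add: z_eq_alt)
  moreover have "length (z n) = n"
    by (simp add: z_def)
  ultimately show "Max ((\<lambda>t. P (s @ t)) ` {t. length t = n}) = P (s @ z n)"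
    by (intro Max_eqI) (auto intro: finite_lists_length_eq_letter)
  show "s \<noteq> [] \<longrightarrow> (\<forall>t. length t = n \<and> P (s @ t) = P (s @ z n) \<longrightarrow> t = z n)"
    using P_append_less_alt[of A s _ n] count_ending_A_le_B(2)[OF assms]
    by (metis flip.simps(1) less_irrefl z_eq_alt)
qed

end
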